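(* For CC-MAR, the price of stability is 1; that is, in every instance there is a Nash equilibrium whose total cost equals the minimum total cost over all strategy profiles (in fact every minimum-total-cost strategy profile is a Nash equilibrium).
   Context: A mixed graph $G=(V,E,A)$ has undirected edges $E\subseteq\binom{V}{2}$ with positive integer weights $w_e$ and arcs $A\subseteq V\times V$. A path is a sequence of pairwise distinct vertices in which consecutive vertices are joined by an edge or by an arc in the forward direction. A CC-MAR instance is $(G,\mathcal{T})$ with $\mathcal{T}$ a multiset of $k$ pairs $(s_i,t_i)$, each connected by some path. A strategy profile $\mathcal{P}=\{P_1,\dots,P_k\}$ consists of $s_i$-$t_i$ paths. For $\{u,v\}\in E$, $x_{uv}$ is the number of paths traversing it from $u$ to $v$. Agent $i$'s cost is $\sum w_{uv}x_{vu}$ over edges $\{u,v\}$ traversed by $P_i$ from $u$ to $v$; total cost is $\mathrm{cost}(\mathcal{P})=\sum_{\{u,v\}\in E}w_{uv}x_{uv}x_{vu}$. A Nash equilibrium is a profile where no agent can strictly lower its own cost by unilaterally changing its path. The price of stability is the ratio of the minimum total cost of a Nash equilibrium to the minimum total cost of any profile. *)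

theory Defs
  imports Main
begin

definition mixed_graph ::
  "'v set \<Rightarrow> 'v set set \<Rightarrow> ('v set \<Rightarrow> nat) \<Rightarrow> ('v \<times> 'v) set \<Rightarrow> bool" where
  "mixed_graph V E w A \<longleftrightarrow>
     finite V
   \<and> (\<forall>e\<in>E. \<exists>u v. u \<in> V \<and> v \<in> V \<and> u \<noteq> v \<and> e = {u, v})
   \<and> (\<forall>e\<in>E. w e > 0)
   \<and> A \<subseteq> V \<times> V"

definition steps :: "'v list \<Rightarrow> ('v \<times> 'v) set" where
  "steps p = set (zip p (tl p))"

definition is_path :: "'v set \<Rightarrow> 'v set set \<Rightarrow> ('v \<times> 'v) set \<Rightarrow> 'v list \<Rightarrow> bool" where
  "is_path V E A p \<longleftrightarrow> p \<noteq> [] \<and> distinct p \<and> set p \<subseteq> V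
     \<and> (\<forall>(u, v) \<in> steps p. {u, v} \<in> E \<or> (u, v) \<in> A)"

definition is_st_path ::
  "'v set \<Rightarrow> 'v set set \<Rightarrow> ('v \<times> 'v) set \<Rightarrow> 'v \<Rightarrow> 'v \<Rightarrow> 'v list \<Rightarrow> bool" where
  "is_st_path V E A s t p \<longleftrightarrow> is_path V E A p \<and> hd p = s \<and> last p = t"

definition is_profile ::
  "'v set \<Rightarrow> 'v set set \<Rightarrow> ('v \<times> 'v) set \<Rightarrow> ('v \<times> 'v) list \<Rightarrow> 'v list list \<Rightarrow> bool" where
  "is_profile V E A T P \<longleftrightarrow> length P = length T
     \<and> (\<forall>i < length T. is_st_path V E A (fst (T ! i)) (snd (T ! i)) (P ! i))"

definition flow :: "'v set set \<Rightarrow> 'v list list \<Rightarrow> 'v \<Rightarrow> 'v \<Rightarrow> nat" where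
  "flow E P u v = card {i. i < length P \<and> {u, v} \<in> E \<and> (u, v) \<in> steps (P ! i)}"

definition agent_cost ::
  "'v set set \<Rightarrow> ('v set \<Rightarrow> nat) \<Rightarrow> 'v list list \<Rightarrow> nat \<Rightarrow> nat" where
  "agent_cost E w P i =
     (\<Sum>(u, v) \<in> {(u, v). (u, v) \<in> steps (P ! i) \<and> {u, v} \<in> E}. w {u, v} * flow E P v u)"

(* an (arbitrary) ordered pair of endpoints of an edge; the product
   x_uv * x_vu does not depend on the choice *)
definition ends :: "'v set \<Rightarrow> 'v \<times> 'v" where
  "ends e = (SOME (u, v). e = {u, v})"

definition total_cost :: "'v set set \<Rightarrow> ('v set \<Rightarrow> nat) \<Rightarrow> 'v list list \<Rightarrow> nat" where
  "total_cost E w P =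
     (\<Sum>e\<in>E. w e * flow E P (fst (ends e)) (snd (ends e)) * flow E P (snd (ends e)) (fst (ends e)))"

definition nash_eq ::
  "'v set \<Rightarrow> 'v set set \<Rightarrow> ('v set \<Rightarrow> nat) \<Rightarrow> ('v \<times> 'v) set \<Rightarrow> ('v \<times> 'v) list \<Rightarrow> 'v list list \<Rightarrow> bool" where
  "nash_eq V E w A T P \<longleftrightarrow> is_profile V E A T P
     \<and> (\<forall>i < length T. \<forall>p'. is_st_path V E A (fst (T ! i)) (snd (T ! i)) p'
          \<longrightarrow> \<not> agent_cost E w (P[i := p']) i < agent_cost E w P i)"

definition optimal_profile ::
  "'v set \<Rightarrow> 'v set set \<Rightarrow> ('v set \<Rightarrow> nat) \<Rightarrow> ('v \<times> 'v) set \<Rightarrow> ('v \<times> 'v) list \<Rightarrow> 'v list list \<Rightarrow> bool" where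
  "optimal_profile V E w A T P \<longleftrightarrow> is_profile V E A T P
     \<and> (\<forall>Q. is_profile V E A T Q \<longrightarrow> total_cost E w P \<le> total_cost E w Q)"

end

theory Submission
  imports Defs
begin

(* The total cost is an exact potential. Split every flow into the contribution of agent i and
   the flow y of the other agents. Since the path of agent i has distinct vertices, it never
   uses an edge in both directions, so summing w_uv x_uv x_vu over both orientations of every
   edge gives
     2 cost(P) = sum_(u,v) w_uv y_uv y_vu + 2 cost_i(P),
   where the first sum does not depend on the path of agent i. Hence a unilateral deviation
   changes the total cost by exactly the change of the deviating agent's cost, and a profile of
   minimum total cost (which exists since costs are natural numbers) is a Nash equilibrium. *)

definition darts :: "'v set set \<Rightarrow> ('v \<times> 'v) set" where
  "darts E = {(u, v). {u, v} \<in> E}"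

definition flow_without :: "'v set set \<Rightarrow> 'v list list \<Rightarrow> nat \<Rightarrow> 'v \<Rightarrow> 'v \<Rightarrow> nat" where
  "flow_without E P i u v =
     card {j. j < length P \<and> j \<noteq> i \<and> {u, v} \<in> E \<and> (u, v) \<in> steps (P ! j)}"

lemma finite_darts:
  assumes "finite E" "\<forall>e\<in>E. finite e"
  shows "finite (darts E)"
proof (rule finite_subset)
  show "darts E \<subseteq> \<Union>E \<times> \<Union>E" unfolding darts_def by auto
  show "finite (\<Union>E \<times> \<Union>E)" using assms by auto
qed

lemma sum_darts_swap: "(\<Sum>(u, v)\<in>darts E. f v u) = (\<Sum>(u, v)\<in>darts E. f u v)"
  by (rule sum.reindex_bij_witness[of _ prod.swap prod.swap]) (auto simp: darts_def insert_commute)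

lemma ends_doubleton: "ends {a, b} = (a, b) \<or> ends {a, b} = (b, a)"
proof -
  have "\<exists>x. case x of (u, v) \<Rightarrow> {a, b} = {u, v}" by auto
  then have "case ends {a, b} of (u, v) \<Rightarrow> {a, b} = {u, v}"
    unfolding ends_def by (rule someI_ex)
  then show ?thesis by (cases "ends {a, b}") (auto simp: doubleton_eq_iff)
qed

lemma ends_eq: "e = {a, b} \<Longrightarrow> {fst (ends e), snd (ends e)} = e"
  using ends_doubleton[of a b] by (auto simp: insert_commute)

lemma sum_darts_symmetric:
  fixes f :: "'v \<Rightarrow> 'v \<Rightarrow> 'a :: comm_semiring_1"
  assumes fin: "finite E" and loopless: "\<forall>e\<in>E. \<exists>u v. u \<noteq> v \<and> e = {u, v}"
    and sym: "\<And>u v. f u v = f v u"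
  shows "(\<Sum>(u, v)\<in>darts E. f u v) = 2 * (\<Sum>e\<in>E. f (fst (ends e)) (snd (ends e)))"
proof -
  let ?edge = "\<lambda>(u, v). {u, v}"
  have "finite (darts E)" using finite_darts fin loopless by fastforce
  moreover have "?edge ` darts E \<subseteq> E" unfolding darts_def by auto
  ultimately have "(\<Sum>(u, v)\<in>darts E. f u v)
      = (\<Sum>e\<in>E. \<Sum>(u, v)\<in>{d \<in> darts E. ?edge d = e}. f u v)"
    using fin by (simp add: sum.group)
  also have "\<dots> = (\<Sum>e\<in>E. 2 * f (fst (ends e)) (snd (ends e)))"
  proof (rule sum.cong[OF refl])
    fix e assume e: "e \<in> E"
    then obtain a b where ab: "a \<noteq> b" "e = {a, b}" using loopless by blast
    have "{d \<in> darts E. ?edge d = e} = {(a, b), (b, a)}"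
      using ab e unfolding darts_def by (auto simp: doubleton_eq_iff insert_commute)
    then have "(\<Sum>(u, v)\<in>{d \<in> darts E. ?edge d = e}. f u v) = f a b + f b a"
      using ab(1) by simp
    also have "\<dots> = 2 * f (fst (ends e)) (snd (ends e))"
      using ends_doubleton[of a b] ab(2) sym[of a b] by (auto simp: mult_2)
    finally show "(\<Sum>(u, v)\<in>{d \<in> darts E. ?edge d = e}. f u v)
        = 2 * f (fst (ends e)) (snd (ends e))" .
  qed
  finally show ?thesis by (simp add: sum_distrib_left)
qed

lemma mixed_graph_finite_edges: "mixed_graph V E w A \<Longrightarrow> finite E"
  unfolding mixed_graph_def by (metis (no_types, lifting) Pow_iff empty_subsetI finite_Pow_iff
      finite_subset insert_subset subsetI)

lemma mixed_graph_finite_darts: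
  assumes "mixed_graph V E w A"
  shows "finite (darts E)"
proof (rule finite_darts)
  show "finite E" by (rule mixed_graph_finite_edges[OF assms])
  show "\<forall>e\<in>E. finite e" using assms unfolding mixed_graph_def by force
qed

lemma total_cost_sum_darts:
  assumes "mixed_graph V E w A"
  shows "2 * total_cost E w P = (\<Sum>(u, v)\<in>darts E. w {u, v} * flow E P u v * flow E P v u)"
proof -
  let ?f = "\<lambda>u v. w {u, v} * flow E P u v * flow E P v u"
  have loopless: "\<forall>e\<in>E. \<exists>u v. u \<noteq> v \<and> e = {u, v}"
    using assms unfolding mixed_graph_def by blast
  have "(\<Sum>(u, v)\<in>darts E. ?f u v) = 2 * (\<Sum>e\<in>E. ?f (fst (ends e)) (snd (ends e)))"
    by (rule sum_darts_symmetric[OF mixed_graph_finite_edges[OF assms] loopless])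
      (simp add: insert_commute)
  also have "(\<Sum>e\<in>E. ?f (fst (ends e)) (snd (ends e))) = total_cost E w P"
    unfolding total_cost_def by (intro sum.cong refl) (metis loopless ends_eq)
  finally show ?thesis by (rule sym)
qed

lemma agent_cost_sum_darts:
  assumes "mixed_graph V E w A"
  shows "agent_cost E w P i
    = (\<Sum>(u, v)\<in>darts E. if (u, v) \<in> steps (P ! i) then w {u, v} * flow E P v u else 0)"
proof -
  have "finite (darts E)" by (rule mixed_graph_finite_darts[OF assms])
  moreover have "{(u, v). (u, v) \<in> steps (P ! i) \<and> {u, v} \<in> E} = darts E \<inter> steps (P ! i)"
    unfolding darts_def by auto
  ultimately show ?thesis
    unfolding agent_cost_def by (simp add: sum.inter_restrict if_distrib case_prod_beta)
qed

lemma steps_asym: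
  assumes "distinct p" "(a, b) \<in> steps p"
  shows "(b, a) \<notin> steps p"
proof
  assume "(b, a) \<in> steps p"
  then obtain m where m: "p ! m = b" "p ! Suc m = a" "Suc m < length p"
    unfolding steps_def in_set_zip by (auto simp: nth_tl)
  from assms(2) obtain k where k: "p ! k = a" "p ! Suc k = b" "Suc k < length p"
    unfolding steps_def in_set_zip by (auto simp: nth_tl)
  have "Suc m = k" "Suc k = m"
    using m k assms(1) by (auto simp: nth_eq_iff_index_eq)
  then show False by simp
qed

lemma flow_eq_flow_without:
  assumes "i < length P"
  shows "flow E P u v = flow_without E P i u v + of_bool ({u, v} \<in> E \<and> (u, v) \<in> steps (P ! i))"
proof -
  let ?others = "{j. j < length P \<and> j \<noteq> i \<and> {u, v} \<in> E \<and> (u, v) \<in> steps (P ! j)}"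
  let ?own = "if {u, v} \<in> E \<and> (u, v) \<in> steps (P ! i) then {i} else {}"
  have "{j. j < length P \<and> {u, v} \<in> E \<and> (u, v) \<in> steps (P ! j)} = ?others \<union> ?own"
    using assms by auto
  moreover have "card (?others \<union> ?own) = card ?others + card ?own"
    by (rule card_Un_disjoint) auto
  ultimately show ?thesis unfolding flow_def flow_without_def by auto
qed

lemma flow_without_list_update: "flow_without E (P[i := q]) i u v = flow_without E P i u v"
  unfolding flow_without_def by (rule arg_cong[where f = card]) auto

lemma total_cost_decompose:
  assumes mg: "mixed_graph V E w A" and i: "i < length P" and dist: "distinct (P ! i)"
  shows "2 * total_cost E w P
    = (\<Sum>(u, v)\<in>darts E. w {u, v} * flow_without E P i u v * flow_without E P i v u)
      + 2 * agent_cost E w P i"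
proof -
  let ?y = "flow_without E P i"
  let ?own = "\<lambda>u v. if (u, v) \<in> steps (P ! i) then w {u, v} * flow E P v u else 0"
  have split: "w {u, v} * flow E P u v * flow E P v u = w {u, v} * ?y u v * ?y v u + ?own u v + ?own v u"
    if "(u, v) \<in> darts E" for u v
  proof -
    have "{u, v} \<in> E" "{v, u} \<in> E" using that unfolding darts_def by (auto simp: insert_commute)
    then show ?thesis
      using flow_eq_flow_without[OF i, of E u v] flow_eq_flow_without[OF i, of E v u]
        steps_asym[OF dist, of u v]
      by (auto simp: insert_commute algebra_simps)
  qed
  have "2 * total_cost E w P = (\<Sum>(u, v)\<in>darts E. w {u, v} * ?y u v * ?y v u + ?own u v + ?own v u)"
    unfolding total_cost_sum_darts[OF mg] by (rule sum.cong) (auto simp: split)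
  also have "\<dots> = (\<Sum>(u, v)\<in>darts E. w {u, v} * ?y u v * ?y v u)
      + (\<Sum>(u, v)\<in>darts E. ?own u v) + (\<Sum>(u, v)\<in>darts E. ?own v u)"
    by (simp add: sum.distrib case_prod_beta)
  also have "(\<Sum>(u, v)\<in>darts E. ?own v u) = (\<Sum>(u, v)\<in>darts E. ?own u v)"
    by (rule sum_darts_swap)
  also have "(\<Sum>(u, v)\<in>darts E. ?own u v) = agent_cost E w P i"
    by (rule agent_cost_sum_darts[OF mg, symmetric])
  finally show ?thesis by simp
qed

lemma total_cost_list_update:
  assumes "mixed_graph V E w A" "i < length P" "distinct (P ! i)" "distinct q"
  shows "total_cost E w (P[i := q]) + agent_cost E w P i
       = total_cost E w P + agent_cost E w (P[i := q]) i"
  using total_cost_decompose[OF assms(1,2,3)]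
    total_cost_decompose[OF assms(1), of i "P[i := q]"] assms(2,4)
  by (simp add: flow_without_list_update)

lemma optimal_profile_imp_nash_eq:
  assumes mg: "mixed_graph V E w A" and opt: "optimal_profile V E w A T P"
  shows "nash_eq V E w A T P"
  unfolding nash_eq_def
proof (intro conjI allI impI)
  show prof: "is_profile V E A T P" using opt unfolding optimal_profile_def by simp
  fix i p'
  assume i: "i < length T" and p': "is_st_path V E A (fst (T ! i)) (snd (T ! i)) p'"
  have len: "length P = length T" using prof unfolding is_profile_def by simp
  have "is_profile V E A T (P[i := p'])"
    using prof p' i unfolding is_profile_def by (auto simp: nth_list_update)
  then have "total_cost E w P \<le> total_cost E w (P[i := p'])"
    using opt unfolding optimal_profile_def by blast
  moreover have "distinct (P ! i)" "distinct p'"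
    using prof p' i unfolding is_profile_def is_st_path_def is_path_def by auto
  ultimately show "\<not> agent_cost E w (P[i := p']) i < agent_cost E w P i"
    using total_cost_list_update[OF mg, of i P p'] i len by linarith
qed

lemma ex_profile:
  assumes "\<forall>(s, t) \<in> set T. \<exists>p. is_st_path V E A s t p"
  shows "\<exists>P. is_profile V E A T P"
proof -
  have "\<forall>i < length T. \<exists>p. is_st_path V E A (fst (T ! i)) (snd (T ! i)) p"
    using assms nth_mem by fastforce
  then obtain path where "\<forall>i < length T. is_st_path V E A (fst (T ! i)) (snd (T ! i)) (path i)"
    by metis
  then have "is_profile V E A T (map path [0..<length T])"
    unfolding is_profile_def by simp
  then show ?thesis ..
qed

lemma ex_optimal_profile:
  assumes "\<forall>(s, t) \<in> set T. \<exists>p. is_st_path V E A s t p"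
  shows "\<exists>P. optimal_profile V E w A T P"
proof -
  obtain P0 where "is_profile V E A T P0" using ex_profile[OF assms] ..
  then obtain P where "is_profile V E A T P"
    and "\<forall>Q. is_profile V E A T Q \<longrightarrow> total_cost E w P \<le> total_cost E w Q"
    using ex_has_least_nat[where m = "total_cost E w"] by metis
  then show ?thesis unfolding optimal_profile_def by blast
qed

theorem mainTheorem2:
  fixes V :: "'v set" and E :: "'v set set" and w :: "'v set \<Rightarrow> nat"
    and A :: "('v \<times> 'v) set" and T :: "('v \<times> 'v) list"
  assumes "mixed_graph V E w A"
    and "\<forall>(s, t) \<in> set T. \<exists>p. is_st_path V E A s t p"
  shows "(\<forall>P. optimal_profile V E w A T P \<longrightarrow> nash_eq V E w A T P)
       \<and> (\<exists>P. nash_eq V E w A T P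
             \<and> (\<forall>Q. is_profile V E A T Q \<longrightarrow> total_cost E w P \<le> total_cost E w Q))"
proof -
  have opt_nash: "\<forall>P. optimal_profile V E w A T P \<longrightarrow> nash_eq V E w A T P"
    using optimal_profile_imp_nash_eq[OF assms(1)] by blast
  obtain P where "optimal_profile V E w A T P" using ex_optimal_profile[OF assms(2)] ..
  then show ?thesis using opt_nash unfolding optimal_profile_def by blast
qed

end
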